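(* Let $n\ge 2$ and let $S=\{A_1,\dots,A_m\}$ be a finite set of real $n\times n$ matrices such that every $A\in S$ satisfies $A\mathbf{1}=\mathbf{1}$ and $\|Ax\|_{\mathcal{P}}\le\|x\|_{\mathcal{P}}$ for all $x$. Then there exists a sequence $\sigma:\mathbb{N}\to\{1,\dots,m\}$ such that for every initial condition $x_0$ the trajectory of $x(t+1)=A_{\sigma(t)}x(t)$, $x(0)=x_0$, converges to a multiple of $\mathbf{1}$ if and only if in the graph of faces $\mathcal{G}$ of $S$ there is a path from every node to node 1.
   Context: $\mathbf{1}=(1,\dots,1)^\top$, $\|x\|_{\mathcal{P}}=\tfrac12(\max_i x_i-\min_i x_i)$, $\mathcal{P}=\{x:\|x\|_{\mathcal{P}}\le 1\}$, which satisfies $\mathcal{P}=-\mathcal{P}$. A face of a polyhedron $\mathcal{Q}$ is a non-empty subset $F$ with $F=\mathcal{Q}$ or $F=\mathcal{Q}\cap\{x:b^\top x=c\}$ where $b^\top x\le c$ on $\mathcal{Q}$; an open face is the relative interior of a face; a proper open face is the relative interior of a face other than $\mathcal{Q}$. If $F$ is a proper open face of $\mathcal{P}$, so is $-F$, and $\pm F$ denotes $F\cup(-F)$. The graph of faces $\mathcal{G}$ is the directed graph with one node for each pair $\{F,-F\}$ of opposite proper open faces of $\mathcal{P}$ and one additional node, "node 1", representing $\operatorname{int}(\mathcal{P})$; there is an edge from the node of $F_i$ to the node of $F_j$ whenever some $A\in S$ satisfies $AF_i\subseteq\pm F_j$, an edge from the node of $F_i$ to node 1 whenever some $A\in S$ satisfies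 $AF_i\subseteq\operatorname{int}(\mathcal{P})$, and a self-loop at node 1. *)

theory Defs
  imports "HOL-Analysis.Analysis"
begin

definition normP :: "real^'n \<Rightarrow> real" where
  "normP x = (Max (range (\<lambda>i. x $ i)) - Min (range (\<lambda>i. x $ i))) / 2"

definition polP :: "(real^'n) set" where
  "polP = {x. normP x \<le> 1}"

definition is_face :: "(real^'n) set \<Rightarrow> (real^'n) set \<Rightarrow> bool" where
  "is_face Q F \<longleftrightarrow> F \<noteq> {} \<and>
     (F = Q \<or> (\<exists>b c. (\<forall>x\<in>Q. b \<bullet> x \<le> c) \<and> F = Q \<inter> {x. b \<bullet> x = c}))"

definition proper_open_face :: "(real^'n) set \<Rightarrow> bool" where
  "proper_open_face G \<longleftrightarrow>
     (\<exists>F. is_face polP F \<and> F \<noteq> polP \<and> G = rel_interior F)"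

definition pmset :: "(real^'n) set \<Rightarrow> (real^'n) set" where
  "pmset F = F \<union> uminus ` F"

text \<open>Nodes of the graph of faces: Some {F, -F} for a proper open face F,
  and None for node 1 (representing int P).\<close>
definition face_node :: "(real^'n) set set option \<Rightarrow> bool" where
  "face_node N \<longleftrightarrow> N = None \<or> (\<exists>F. proper_open_face F \<and> N = Some {F, uminus ` F})"

definition face_edge ::
  "(real^'n^'n) set \<Rightarrow> (real^'n) set set option \<Rightarrow> (real^'n) set set option \<Rightarrow> bool" where
  "face_edge S N N' \<longleftrightarrow> face_node N \<and> face_node N' \<and>
     (case (N, N') of
        (None, None) \<Rightarrow> True
      | (None, Some _) \<Rightarrow> False
      | (Some FF, None) \<Rightarrow> (\<exists>F\<in>FF. \<exists>A\<in>S. (\<lambda>x. A *v x) ` F \<subseteq> interior polP)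
      | (Some FF, Some GG) \<Rightarrow>
          (\<exists>F\<in>FF. \<exists>G\<in>GG. \<exists>A\<in>S. (\<lambda>x. A *v x) ` F \<subseteq> pmset G))"

primrec traj :: "(nat \<Rightarrow> real^'n^'n) \<Rightarrow> (nat \<Rightarrow> nat) \<Rightarrow> real^'n \<Rightarrow> nat \<Rightarrow> real^'n" where
  "traj A \<sigma> x0 0 = x0"
| "traj A \<sigma> x0 (Suc t) = A (\<sigma> t) *v traj A \<sigma> x0 t"

end

theory Submission
  imports Defs
begin

text \<open>
  A linear map that fixes \<open>\<one>\<close> and does not expand \<open>\<parallel>\<cdot>\<parallel>\<^sub>P\<close> sends every proper open face
  of the polytope \<open>P\<close> either into \<open>int P\<close> or into a single proper open face; the graph of faces
  records exactly these moves. If some face cannot reach node 1, a trajectory started on it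
  stays on \<open>\<partial>P\<close> for ever, so \<open>\<parallel>x(t)\<parallel>\<^sub>P = 1\<close> and there is no consensus. Conversely, paths to
  node 1 give words pushing each face into \<open>int P\<close>; since there are finitely many faces
  and the image of a face is again inside a face or inside \<open>int P\<close>, these words can be
  concatenated into one word \<open>W\<close> mapping all of \<open>\<partial>P\<close> into \<open>int P\<close>. By compactness of
  \<open>\<partial>P\<close> modulo \<open>\<one>\<close>, \<open>W\<close> contracts \<open>\<parallel>\<cdot>\<parallel>\<^sub>P\<close> by a factor \<open>\<gamma> < 1\<close>, so repeating \<open>W\<close>
  periodically makes \<open>\<parallel>x(t)\<parallel>\<^sub>P\<close> decay geometrically; the increments \<open>x(t+1) - x(t)\<close>
  are bounded by \<open>\<parallel>x(t)\<parallel>\<^sub>P\<close>, hence summable, and the limit is a multiple of \<open>\<one>\<close>.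
\<close>

section \<open>The seminorm \<open>normP\<close>\<close>

text \<open>All statements are phrased with \<open>vec 1\<close>, which the simplifier would otherwise rewrite to \<open>1\<close>.\<close>
declare vec_1 [simp del]

lemma component_diff_le_normP: "(x::real^'n) $ i - x $ j \<le> 2 * normP x"
  by (simp add: normP_def finite_UNIV Max_ge Min_le diff_mono)

lemma normP_attained: "\<exists>i j. (x::real^'n) $ i - x $ j = 2 * normP x"
proof -
  have "Max (range (\<lambda>i. x $ i)) \<in> range (\<lambda>i. x $ i)" "Min (range (\<lambda>i. x $ i)) \<in> range (\<lambda>i. x $ i)"
    by (auto intro: Max_in Min_in simp: finite_UNIV)
  then show ?thesis
    unfolding normP_def by (metis (mono_tags, lifting) rangeE times_divide_eq_right nonzero_mult_div_cancel_left zero_neq_numeral)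
qed

lemma normP_eqI:
  assumes "\<And>i j. (x::real^'n) $ i - x $ j \<le> 2 * r" and "x $ i - x $ j = 2 * r"
  shows "normP x = r"
  using assms component_diff_le_normP[of x] normP_attained[of x] by (smt (verit))

lemma normP_nonneg: "0 \<le> normP (x::real^'n)"
  using component_diff_le_normP[of x i i] by simp

lemma normP_uminus [simp]: "normP (- (x::real^'n)) = normP x"
proof -
  obtain i j where "x $ i - x $ j = 2 * normP x"
    using normP_attained by blast
  then show ?thesis
    by (intro normP_eqI[of _ _ j i]) (auto simp: component_diff_le_normP[of x _ _, simplified])
qed

lemma normP_scaleR: "0 \<le> c \<Longrightarrow> normP (c *\<^sub>R (x::real^'n)) = c * normP x"
proof -
  assume c: "0 \<le> c"
  obtain i j where ij: "x $ i - x $ j = 2 * normP x"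
    using normP_attained by blast
  show ?thesis
  proof (rule normP_eqI[of _ _ i j])
    fix k l
    have "c * (x $ k - x $ l) \<le> c * (2 * normP x)"
      using c component_diff_le_normP by (rule mult_left_mono[rotated])
    then show "(c *\<^sub>R x) $ k - (c *\<^sub>R x) $ l \<le> 2 * (c * normP x)"
      by (simp add: algebra_simps)
  qed (use ij in \<open>simp add: algebra_simps\<close>)
qed

lemma normP_add_const [simp]: "normP ((x::real^'n) + c *\<^sub>R vec 1) = normP x"
proof -
  obtain i j where "x $ i - x $ j = 2 * normP x"
    using normP_attained by blast
  then show ?thesis
    by (intro normP_eqI[of _ _ i j]) (auto simp: component_diff_le_normP)
qed

lemma normP_diff_const [simp]: "normP ((x::real^'n) - c *\<^sub>R vec 1) = normP x"
  using normP_add_const[of x "- c"] by simp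

lemma normP_const [simp]: "normP (c *\<^sub>R vec 1 :: real^'n) = 0"
  using normP_add_const[of 0 c] by (simp add: normP_def)

lemma normP_eq_0_iff: "normP (x::real^'n) = 0 \<longleftrightarrow> x = (x $ k) *\<^sub>R vec 1"
proof
  assume "normP x = 0"
  then have "x $ i \<le> x $ j" for i j
    using component_diff_le_normP[of x i j] by simp
  then show "x = (x $ k) *\<^sub>R vec 1"
    by (simp add: vec_eq_iff order_antisym)
next
  show "x = (x $ k) *\<^sub>R vec 1 \<Longrightarrow> normP x = 0"
    by (metis normP_const)
qed

lemma normP_triangle: "normP ((x::real^'n) + y) \<le> normP x + normP y"
proof -
  obtain i j where "(x + y) $ i - (x + y) $ j = 2 * normP (x + y)"
    using normP_attained by blast
  then show ?thesis
    using component_diff_le_normP[of x i j] component_diff_le_normP[of y i j] by simp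
qed

lemma normP_le_norm: "normP (x::real^'n) \<le> norm x"
proof -
  obtain i j where "x $ i - x $ j = 2 * normP x"
    using normP_attained by blast
  then show ?thesis
    using component_le_norm_cart[of x i] component_le_norm_cart[of x j] by linarith
qed

lemma norm_sub_const_le_normP:
  "norm ((x::real^'n) - (x $ k) *\<^sub>R vec 1) \<le> 2 * CARD('n) * normP x"
proof -
  have "\<bar>(x - (x $ k) *\<^sub>R vec 1) $ i\<bar> \<le> 2 * normP x" for i
    using component_diff_le_normP[of x i k] component_diff_le_normP[of x k i] by auto
  then have "(\<Sum>i\<in>UNIV. \<bar>(x - (x $ k) *\<^sub>R vec 1) $ i\<bar>) \<le> CARD('n) * (2 * normP x)"
    by (intro sum_bounded_above) auto
  then show ?thesis
    using norm_le_l1_cart[of "x - (x $ k) *\<^sub>R vec 1"] by simp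
qed

lemma continuous_on_normP: "continuous_on S (normP :: real^'n \<Rightarrow> real)"
proof -
  have "\<bar>normP x - normP y\<bar> \<le> norm (x - y)" for x y :: "real^'n"
    using normP_triangle[of y "x - y"] normP_triangle[of x "y - x"]
      normP_le_norm[of "x - y"] normP_le_norm[of "y - x"] by (simp add: norm_minus_commute)
  then show ?thesis
    by (intro lipschitz_on_continuous_on[of 1] lipschitz_onI) (auto simp: dist_norm dist_real_def)
qed

lemma tendsto_normP:
  fixes f :: "'a \<Rightarrow> real^'n"
  shows "(f \<longlongrightarrow> l) F \<Longrightarrow> ((\<lambda>t. normP (f t)) \<longlongrightarrow> normP l) F"
  using continuous_on_normP[of "UNIV :: (real^'n) set"]
  by (intro isCont_tendsto_compose[of l normP]) (simp_all add: continuous_on_eq_continuous_at)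

lemma exists_normP_eq_1:
  assumes "CARD('n) \<ge> 2"
  shows "\<exists>x::real^'n. normP x = 1"
proof -
  have "\<exists>i j::'n. i \<noteq> j"
  proof (rule ccontr)
    assume "\<nexists>i j::'n. i \<noteq> j"
    then have "(UNIV::'n set) \<subseteq> {undefined}"
      by auto
    then have "CARD('n) \<le> 1"
      using card_mono[of "{undefined}" "UNIV::'n set"] by simp
    with assms show False
      by simp
  qed
  then obtain i j :: 'n where "i \<noteq> j"
    by blast
  then have "normP (axis i 2 :: real^'n) = 1"
    by (intro normP_eqI[of _ _ i j]) (auto simp: axis_def)
  then show ?thesis ..
qed

section \<open>The polytope \<open>polP\<close> and its faces\<close>

lemma polP_eq_Inter_halfspaces:
  "(polP :: (real^'n) set) = (\<Inter>(i,j)\<in>UNIV. {x. (axis i 1 - axis j 1) \<bullet> x \<le> 2})"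
proof -
  have "normP x \<le> 1 \<longleftrightarrow> (\<forall>i j. x $ i - x $ j \<le> 2)" for x :: "real^'n"
    using component_diff_le_normP[of x] normP_attained[of x] by (smt (verit))
  then show ?thesis
    by (auto simp: polP_def inner_diff_left inner_axis inner_axis')
qed

lemma polyhedron_polP: "polyhedron (polP :: (real^'n) set)"
  unfolding polP_eq_Inter_halfspaces
  by (intro polyhedron_Inter) (auto simp: polyhedron_halfspace_le)

lemma convex_polP: "convex (polP :: (real^'n) set)"
  by (simp add: polyhedron_imp_convex polyhedron_polP)

lemma interior_polP: "interior (polP :: (real^'n) set) = {x. normP x < 1}"
proof
  show "{x::real^'n. normP x < 1} \<subseteq> interior polP"
    by (rule interior_maximal) (auto simp: polP_def intro: open_Collect_less continuous_on_normP)
next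
  show "interior (polP :: (real^'n) set) \<subseteq> {x. normP x < 1}"
  proof
    fix x :: "real^'n"
    assume "x \<in> interior polP"
    then obtain e where e: "0 < e" "ball x e \<subseteq> polP"
      by (meson mem_interior)
    obtain i j where ij: "x $ i - x $ j = 2 * normP x"
      using normP_attained by blast
    show "x \<in> {x. normP x < 1}"
    proof (cases "i = j")
      case True
      then show ?thesis using ij by simp
    next
      case False
      let ?y = "x + (e / 2) *\<^sub>R axis i 1"
      have "?y \<in> polP"
        using e by (intro subsetD[OF e(2)]) (simp add: dist_norm)
      then have "?y $ i - ?y $ j \<le> 2"
        using component_diff_le_normP[of ?y i j] by (simp add: polP_def)
      then show ?thesis
        using ij False e(1) by (simp add: axis_def)
    qed
  qed
qed

lemma rel_interior_polP: "rel_interior (polP :: (real^'n) set) = interior polP"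
proof -
  have "(0::real^'n) \<in> interior polP"
    by (simp add: interior_polP normP_def)
  then show ?thesis
    by (intro rel_interior_nonempty_interior) auto
qed

lemma is_face_polP_iff: "is_face (polP :: (real^'n) set) F \<longleftrightarrow> F \<noteq> {} \<and> F face_of polP"
proof
  assume "is_face polP F"
  then show "F \<noteq> {} \<and> F face_of polP"
    unfolding is_face_def
    using face_of_refl[OF convex_polP] face_of_Int_supporting_hyperplane_le[OF convex_polP] by blast
next
  assume F: "F \<noteq> {} \<and> F face_of polP"
  then have "F exposed_face_of polP"
    using exposed_face_of_polyhedron[OF polyhedron_polP] by blast
  then show "is_face polP F"
    using F unfolding exposed_face_of_def is_face_def by blast
qed

lemma proper_open_face_iff:
  "proper_open_face (G :: (real^'n) set) \<longleftrightarrow>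
     (\<exists>F. F face_of polP \<and> F \<noteq> {} \<and> F \<noteq> polP \<and> G = rel_interior F)"
  unfolding proper_open_face_def is_face_polP_iff by blast

lemma finite_proper_open_faces: "finite {G :: (real^'n) set. proper_open_face G}"
proof -
  have "{G :: (real^'n) set. proper_open_face G} \<subseteq> rel_interior ` {F. F face_of polP}"
    unfolding proper_open_face_iff by blast
  then show ?thesis
    using finite_polyhedron_faces[OF polyhedron_polP] finite_subset by blast
qed

lemma proper_open_face_nonempty: "proper_open_face (G :: (real^'n) set) \<Longrightarrow> G \<noteq> {}"
  unfolding proper_open_face_iff using rel_interior_eq_empty face_of_imp_convex by blast

lemma normP_proper_open_face:
  assumes "proper_open_face G" and "x \<in> G"
  shows "normP (x :: real^'n) = 1"
proof -
  obtain F where F: "F face_of polP" "F \<noteq> polP" "x \<in> rel_interior F"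
    using assms unfolding proper_open_face_iff by blast
  then have "x \<in> polP" "x \<notin> interior polP"
    using rel_interior_subset face_of_imp_subset[OF F(1)] face_of_disjoint_interior[OF F(1,2)] by blast+
  then have "normP x \<le> 1" "\<not> normP x < 1"
    using interior_polP by (auto simp: polP_def)
  then show ?thesis
    by simp
qed

lemma exists_face_rel_interior_superset:
  fixes P :: "'a::euclidean_space set"
  assumes "polyhedron P" "convex C" "C \<subseteq> P"
  shows "\<exists>H. H face_of P \<and> C \<subseteq> H \<and> rel_interior C \<subseteq> rel_interior H"
proof -
  define H where "H = \<Inter>{H. H face_of P \<and> C \<subseteq> H}"
  have H: "H face_of P"
    unfolding H_def using face_of_refl[OF polyhedron_imp_convex[OF assms(1)]] assms(3)
    by (intro face_of_Inter) auto
  have CH: "C \<subseteq> H"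
    unfolding H_def by blast
  have "y \<in> rel_interior H" if y: "y \<in> rel_interior C" for y
  proof (rule ccontr)
    assume "y \<notin> rel_interior H"
    moreover have "y \<in> H"
      using y CH rel_interior_subset by blast
    ultimately obtain K where K: "K facet_of H" "y \<in> K"
      using rel_boundary_of_polyhedron[OF face_of_polyhedron_polyhedron[OF assms(1) H]] by blast
    then have KH: "K face_of H"
      by (simp add: facet_of_imp_face_of)
    \<comment> \<open>a face of \<open>H\<close> meeting \<open>rel_interior C\<close> contains \<open>C\<close>, contradicting minimality of \<open>H\<close>\<close>
    have "C \<subseteq> K"
      using subset_of_face_of[OF KH CH] y K(2) by blast
    then have "H \<subseteq> K"
      unfolding H_def using face_of_trans[OF KH H] by blast
    then show False
      using K(1) facet_of_imp_subset[OF K(1)] by auto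
  qed
  then show ?thesis
    using H CH by blast
qed

lemma proper_open_face_image:
  assumes f: "linear f" "\<And>x. normP (f x) \<le> normP x"
    and G: "proper_open_face (G :: (real^'n) set)"
  shows "f ` G \<subseteq> interior polP \<or> (\<exists>H. proper_open_face H \<and> f ` G \<subseteq> H)"
proof -
  obtain F where F: "F face_of polP" "F \<noteq> {}" "G = rel_interior F"
    using G unfolding proper_open_face_iff by blast
  have "convex F"
    using F(1) face_of_imp_convex by blast
  moreover have "f ` F \<subseteq> polP"
    using face_of_imp_subset[OF F(1)] f(2) by (auto simp: polP_def intro: order_trans)
  ultimately obtain H where H: "H face_of polP" "f ` F \<subseteq> H" "rel_interior (f ` F) \<subseteq> rel_interior H"
    using exists_face_rel_interior_superset[OF polyhedron_polP, of "f ` F"] f(1)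
    by (auto intro: convex_linear_image)
  have image: "f ` G = rel_interior (f ` F)"
    using rel_interior_convex_linear_image[OF f(1) \<open>convex F\<close>] F(3) by simp
  show ?thesis
  proof (cases "H = polP")
    case True
    then show ?thesis
      using H(3) image rel_interior_polP by auto
  next
    case False
    then have "proper_open_face (rel_interior H)"
      using H(1,2) F(2) unfolding proper_open_face_iff by blast
    then show ?thesis
      using H(3) image by blast
  qed
qed

lemma normP_proper_open_face_pmset:
  "proper_open_face G \<Longrightarrow> x \<in> pmset G \<Longrightarrow> normP (x :: real^'n) = 1"
  unfolding pmset_def by (auto dest: normP_proper_open_face)

section \<open>The graph of faces\<close>

abbreviation node_of :: "(real^'n) set \<Rightarrow> (real^'n) set set option" where
  "node_of F \<equiv> Some {F, uminus ` F}"

lemma uminus_mem_pmset: "x \<in> pmset F \<Longrightarrow> - x \<in> pmset F"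
  unfolding pmset_def by (auto simp: image_iff)

lemma pmset_pair: "F \<in> {G, uminus ` G} \<Longrightarrow> pmset F = pmset G"
  unfolding pmset_def by (auto simp: image_image)

lemma linear_image_pmset_subset:
  assumes "linear f" "\<And>y. y \<in> T \<Longrightarrow> - y \<in> T" "f ` F \<subseteq> T"
  shows "f ` pmset F \<subseteq> T"
  using assms by (force simp: pmset_def linear_neg)

lemma face_edge_interiorI:
  assumes "proper_open_face G" "M \<in> S" "(\<lambda>x. M *v x) ` G \<subseteq> interior polP"
  shows "face_edge S (node_of G) None"
  using assms unfolding face_edge_def face_node_def by auto

lemma face_edge_faceI:
  assumes "proper_open_face G" "proper_open_face H" "M \<in> S" "(\<lambda>x. M *v x) ` G \<subseteq> H"
  shows "face_edge S (node_of G) (node_of H)"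
proof -
  have "(\<lambda>x. M *v x) ` G \<subseteq> pmset H"
    using assms(4) by (auto simp: pmset_def)
  moreover have "face_node (node_of G)" "face_node (node_of H)"
    using assms(1,2) unfolding face_node_def by blast+
  ultimately show ?thesis
    using assms(3) unfolding face_edge_def by fastforce
qed

lemma face_edge_interiorD:
  assumes "face_edge S (node_of G) None"
  obtains M where "M \<in> S" "(\<lambda>x. M *v x) ` pmset G \<subseteq> interior polP"
proof -
  obtain F M where F: "F \<in> {G, uminus ` G}"
    and M: "M \<in> S" "(\<lambda>x. M *v x) ` F \<subseteq> interior polP"
    using assms unfolding face_edge_def by auto
  have "- y \<in> interior polP" if "y \<in> interior polP" for y :: "real^'n"
    using that by (simp add: interior_polP)
  then have "(\<lambda>x. M *v x) ` pmset F \<subseteq> interior polP"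
    by (rule linear_image_pmset_subset[OF matrix_vector_mul_linear _ M(2)])
  then show ?thesis
    using that M(1) pmset_pair[OF F] by simp
qed

lemma face_edge_faceD:
  assumes "face_edge S (node_of G) (Some HH)"
  obtains H M where "M \<in> S" "HH = {H, uminus ` H}" "(\<lambda>x. M *v x) ` pmset G \<subseteq> pmset H"
proof -
  obtain H where H: "HH = {H, uminus ` H}"
    using assms unfolding face_edge_def face_node_def by auto
  obtain F H' M where F: "F \<in> {G, uminus ` G}" and H': "H' \<in> HH"
    and M: "M \<in> S" "(\<lambda>x. M *v x) ` F \<subseteq> pmset H'"
    using assms unfolding face_edge_def by auto
  have "pmset H' = pmset H"
    using H H' by (intro pmset_pair) simp
  then have "(\<lambda>x. M *v x) ` pmset F \<subseteq> pmset H"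
    using M(2) uminus_mem_pmset by (intro linear_image_pmset_subset[OF matrix_vector_mul_linear]) auto
  then show ?thesis
    using that H M(1) pmset_pair[OF F] by simp
qed

definition apply_word :: "(nat \<Rightarrow> real^'n^'n) \<Rightarrow> nat list \<Rightarrow> real^'n \<Rightarrow> real^'n" where
  "apply_word A w = fold (\<lambda>i x. A i *v x) w"

lemma apply_word_Nil [simp]: "apply_word A [] x = x"
  by (simp add: apply_word_def)

lemma apply_word_Cons [simp]: "apply_word A (i # w) x = apply_word A w (A i *v x)"
  by (simp add: apply_word_def)

lemma apply_word_Cons_eq_comp: "apply_word A (i # w) = apply_word A w \<circ> (\<lambda>x. A i *v x)"
  by (simp add: fun_eq_iff)

lemma apply_word_append: "apply_word A (v @ w) x = apply_word A w (apply_word A v x)"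
  by (simp add: apply_word_def)

lemma linear_apply_word: "linear (apply_word A w)"
proof (induction w)
  case Nil
  show ?case by (simp add: apply_word_def linear_ident)
next
  case (Cons i w)
  then show ?case
    unfolding apply_word_Cons_eq_comp by (rule linear_compose[OF matrix_vector_mul_linear])
qed

lemma traj_eq_apply_word: "traj A \<sigma> x0 t = apply_word A (map \<sigma> [0..<t]) x0"
  by (induction t) (simp_all add: apply_word_append)

lemma traj_add: "traj A \<sigma> x0 (s + t) = traj A (\<lambda>k. \<sigma> (s + k)) (traj A \<sigma> x0 s) t"
  by (induction t) auto

locale nonexpansive_family =
  fixes A :: "nat \<Rightarrow> real^'n^'n" and I :: "nat set"
  assumes nonexpansive: "i \<in> I \<Longrightarrow> normP (A i *v x) \<le> normP x"
begin

lemma normP_apply_word_le: "set w \<subseteq> I \<Longrightarrow> normP (apply_word A w x) \<le> normP x"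
  by (induction w arbitrary: x) (auto intro: order_trans[OF _ nonexpansive])

lemma normP_traj_le: "\<forall>t. \<sigma> t \<in> I \<Longrightarrow> normP (traj A \<sigma> x0 t) \<le> normP x0"
  by (induction t) (auto intro: order_trans nonexpansive)

lemma apply_word_interior: "set w \<subseteq> I \<Longrightarrow> apply_word A w ` interior polP \<subseteq> interior polP"
  using normP_apply_word_le by (fastforce simp: interior_polP intro: le_less_trans)

lemma proper_open_face_apply_word:
  "set w \<subseteq> I \<Longrightarrow> proper_open_face G \<Longrightarrow>
     apply_word A w ` G \<subseteq> interior polP \<or> (\<exists>H. proper_open_face H \<and> apply_word A w ` G \<subseteq> H)"
  by (rule proper_open_face_image[OF linear_apply_word normP_apply_word_le])

lemma word_into_interior_of_path:
  assumes "(face_edge (A ` I))\<^sup>*\<^sup>* (node_of G) None"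
  shows "\<exists>w. set w \<subseteq> I \<and> apply_word A w ` pmset G \<subseteq> interior polP"
proof -
  have "\<forall>G. N = node_of G \<longrightarrow> (\<exists>w. set w \<subseteq> I \<and> apply_word A w ` pmset G \<subseteq> interior polP)"
    if "(face_edge (A ` I))\<^sup>*\<^sup>* N None" for N
    using that
  proof (induction rule: converse_rtranclp_induct)
    case base
    then show ?case by simp
  next
    case (step N N')
    show ?case
    proof (intro allI impI)
      fix G
      assume N: "N = node_of G"
      show "\<exists>w. set w \<subseteq> I \<and> apply_word A w ` pmset G \<subseteq> interior polP"
      proof (cases N')
        case None
        have "face_edge (A ` I) (node_of G) None"
          using step(1) by (simp only: N None)
        then obtain M where M: "M \<in> A ` I" "(\<lambda>x. M *v x) ` pmset G \<subseteq> interior polP"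
          by (rule face_edge_interiorD)
        from M(1) obtain i where "i \<in> I" "M = A i"
          by blast
        with M(2) have "i \<in> I" "(\<lambda>x. A i *v x) ` pmset G \<subseteq> interior polP"
          by simp_all
        moreover have "apply_word A [i] = (\<lambda>x. A i *v x)"
          by (simp add: fun_eq_iff)
        ultimately show ?thesis
          by (intro exI[of _ "[i]"]) simp
      next
        case (Some HH)
        have "face_edge (A ` I) (node_of G) (Some HH)"
          using step(1) by (simp only: N Some)
        then obtain H M where M: "M \<in> A ` I" "HH = {H, uminus ` H}"
          "(\<lambda>x. M *v x) ` pmset G \<subseteq> pmset H"
          by (rule face_edge_faceD)
        from M(1) obtain i where i: "i \<in> I" "M = A i"
          by blast
        with M(3) have into: "(\<lambda>x. A i *v x) ` pmset G \<subseteq> pmset H"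
          by simp
        have "N' = node_of H"
          using Some M(2) by simp
        then obtain v where v: "set v \<subseteq> I" "apply_word A v ` pmset H \<subseteq> interior polP"
          using step.IH by blast
        have "apply_word A (i # v) ` pmset G \<subseteq> apply_word A v ` pmset H"
          using into by (auto simp: apply_word_Cons_eq_comp image_comp[symmetric])
        then show ?thesis
          using i(1) v by (intro exI[of _ "i # v"]) auto
      qed
    qed
  qed
  then show ?thesis
    using assms by blast
qed

text \<open>
  The word for one more face is found by first applying the word \<open>w\<close> for the others:
  \<open>w\<close> pushes the new face into \<open>int P\<close> or into another face, which has a word of its own.
\<close>
lemma word_into_interior_finite:
  assumes words: "\<And>G. proper_open_face G \<Longrightarrow> \<exists>w. set w \<subseteq> I \<and> apply_word A w ` G \<subseteq> interior polP"
    and "finite GS" "\<forall>G\<in>GS. proper_open_face G"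
  shows "\<exists>W. set W \<subseteq> I \<and> apply_word A W ` \<Union>GS \<subseteq> interior polP"
  using assms(2,3)
proof (induction GS rule: finite_induct)
  case empty
  show ?case by (intro exI[of _ "[]"]) simp
next
  case (insert G GS)
  then obtain w where w: "set w \<subseteq> I" "apply_word A w ` \<Union>GS \<subseteq> interior polP"
    by auto
  have G: "proper_open_face G"
    using insert.prems by simp
  obtain v where v: "set v \<subseteq> I" "apply_word A (w @ v) ` G \<subseteq> interior polP"
  proof -
    consider "apply_word A w ` G \<subseteq> interior polP"
      | H where "proper_open_face H" "apply_word A w ` G \<subseteq> H"
      using proper_open_face_apply_word[OF w(1) G] by blast
    then show ?thesis
    proof cases
      case 1
      then show ?thesis using that[of "[]"] by simp
    next
      case (2 H)
      then obtain v where "set v \<subseteq> I" "apply_word A v ` H \<subseteq> interior polP"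
        using words by blast
      then show ?thesis
        using that[of v] 2(2) by (force simp: apply_word_append)
    qed
  qed
  have "apply_word A (w @ v) ` \<Union>GS \<subseteq> interior polP"
    using w(2) apply_word_interior[OF v(1)] by (force simp: apply_word_append)
  then show ?case
    using w(1) v by (intro exI[of _ "w @ v"]) auto
qed

lemma word_into_interior:
  assumes paths: "\<And>F. proper_open_face F \<Longrightarrow> (face_edge (A ` I))\<^sup>*\<^sup>* (node_of F) None"
  shows "\<exists>W. set W \<subseteq> I \<and> (\<forall>x. normP x = 1 \<longrightarrow> normP (apply_word A W x) < 1)"
proof -
  have "\<exists>w. set w \<subseteq> I \<and> apply_word A w ` G \<subseteq> interior polP" if "proper_open_face G" for G
    using word_into_interior_of_path[OF paths[OF that]] by (auto simp: pmset_def)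
  then obtain W where W: "set W \<subseteq> I" "apply_word A W ` \<Union>{G. proper_open_face G} \<subseteq> interior polP"
    using word_into_interior_finite[OF _ finite_proper_open_faces] by blast
  have "normP (apply_word A W x) < 1" if x: "normP x = 1" for x
  proof -
    have "{x} \<subseteq> polP"
      using x by (simp add: polP_def)
    then obtain H where H: "H face_of polP" "x \<in> rel_interior H"
      using exists_face_rel_interior_superset[OF polyhedron_polP convex_singleton] by auto
    moreover have "H \<noteq> polP"
      using H(2) x by (auto simp: rel_interior_polP interior_polP)
    ultimately have "proper_open_face (rel_interior H)" "x \<in> rel_interior H"
      unfolding proper_open_face_iff by auto
    then show ?thesis
      using W(2) by (auto simp: interior_polP)
  qed
  then show ?thesis
    using W(1) by blast
qed

lemma trajectory_in_reachable_face:
  assumes \<sigma>: "\<forall>t. \<sigma> t \<in> I" and F: "proper_open_face F" "x0 \<in> F"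
    and no_path: "\<not> (face_edge (A ` I))\<^sup>*\<^sup>* (node_of F) None"
  shows "\<exists>G. proper_open_face G \<and> (face_edge (A ` I))\<^sup>*\<^sup>* (node_of F) (node_of G)
           \<and> traj A \<sigma> x0 t \<in> pmset G"
proof (induction t)
  case 0
  show ?case using F by (auto simp: pmset_def)
next
  case (Suc t)
  then obtain G where G: "proper_open_face G"
    and reach: "(face_edge (A ` I))\<^sup>*\<^sup>* (node_of F) (node_of G)"
    and mem: "traj A \<sigma> x0 t \<in> pmset G"
    by blast
  let ?f = "\<lambda>x. A (\<sigma> t) *v x"
  have M: "A (\<sigma> t) \<in> A ` I"
    using \<sigma> by blast
  from proper_open_face_image[OF matrix_vector_mul_linear nonexpansive G] \<sigma>
  consider "?f ` G \<subseteq> interior polP" | H where "proper_open_face H" "?f ` G \<subseteq> H"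
    by blast
  then show ?case
  proof cases
    case 1
    with reach have "(face_edge (A ` I))\<^sup>*\<^sup>* (node_of F) None"
      using face_edge_interiorI[OF G M] by (meson rtranclp.rtrancl_into_rtrancl)
    with no_path show ?thesis ..
  next
    case (2 H)
    have "?f ` pmset G \<subseteq> pmset H"
      using 2(2) uminus_mem_pmset
      by (intro linear_image_pmset_subset[OF matrix_vector_mul_linear]) (auto simp: pmset_def)
    then have "traj A \<sigma> x0 (Suc t) \<in> pmset H"
      using mem by auto
    moreover have "(face_edge (A ` I))\<^sup>*\<^sup>* (node_of F) (node_of H)"
      using reach face_edge_faceI[OF G 2(1) M 2(2)] by (meson rtranclp.rtrancl_into_rtrancl)
    ultimately show ?thesis
      using 2(1) by blast
  qed
qed

lemma paths_if_consensus_switching: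
  assumes \<sigma>: "\<forall>t. \<sigma> t \<in> I" and consensus: "\<forall>x0. \<exists>c::real. traj A \<sigma> x0 \<longlonglongrightarrow> c *\<^sub>R vec 1"
    and F: "proper_open_face F"
  shows "(face_edge (A ` I))\<^sup>*\<^sup>* (node_of F) None"
proof (rule ccontr)
  assume no_path: "\<not> (face_edge (A ` I))\<^sup>*\<^sup>* (node_of F) None"
  obtain x0 where x0: "x0 \<in> F"
    using proper_open_face_nonempty[OF F] by blast
  have on_boundary: "normP (traj A \<sigma> x0 t) = 1" for t
    using trajectory_in_reachable_face[OF \<sigma> F x0 no_path] normP_proper_open_face_pmset by blast
  obtain c where "traj A \<sigma> x0 \<longlonglongrightarrow> c *\<^sub>R vec 1"
    using consensus by blast
  then have "(\<lambda>t. normP (traj A \<sigma> x0 t)) \<longlonglongrightarrow> 0"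
    by (metis tendsto_normP normP_const)
  then show False
    by (simp add: on_boundary LIMSEQ_const_iff)
qed

end

section \<open>Convergence to consensus\<close>

lemma norm_mult_sub_le_normP:
  fixes M :: "real^'n^'n"
  assumes "M *v vec 1 = vec 1"
  shows "norm (M *v y - y) \<le> (onorm (\<lambda>x. M *v x) + 1) * (2 * CARD('n)) * normP y"
proof -
  obtain k :: 'n where True by blast
  define z where "z = y - (y $ k) *\<^sub>R vec 1"
  have "M *v y - y = M *v z - z"
    using assms by (simp add: z_def matrix_vector_mult_diff_distrib matrix_vector_mult_scaleR)
  also have "norm \<dots> \<le> norm (M *v z) + norm z"
    by (rule norm_triangle_ineq4)
  also have "\<dots> \<le> (onorm (\<lambda>x. M *v x) + 1) * norm z"
    using onorm[OF matrix_vector_mul_bounded_linear, of M z] by (simp add: algebra_simps)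
  also have "\<dots> \<le> (onorm (\<lambda>x. M *v x) + 1) * (2 * CARD('n) * normP y)"
    unfolding z_def using onorm_pos_le[OF matrix_vector_mul_bounded_linear, of M]
    by (intro mult_left_mono norm_sub_const_le_normP) auto
  finally show ?thesis
    by (simp add: algebra_simps)
qed

lemma power_div_le_geometric:
  fixes \<gamma> :: real
  assumes "0 < L" "0 \<le> \<gamma>" "\<gamma> < 1"
  obtains \<rho> where "0 < \<rho>" "\<rho> < 1" "\<And>t. \<gamma> ^ (t div L) \<le> \<rho> ^ t / \<rho> ^ L"
proof
  define \<rho> where "\<rho> = root L (max \<gamma> (1/2))"
  have \<rho>_pow: "\<rho> ^ L = max \<gamma> (1/2)"
    using assms by (simp add: \<rho>_def real_root_pow_pos)
  show \<rho>: "0 < \<rho>" "\<rho> < 1"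
    using assms by (auto simp: \<rho>_def real_root_lt_1_iff)
  fix t
  have "\<gamma> ^ (t div L) \<le> (\<rho> ^ L) ^ (t div L)"
    unfolding \<rho>_pow using assms(2) by (intro power_mono) auto
  also have "\<dots> = \<rho> ^ (L * (t div L) + L) / \<rho> ^ L"
    using \<rho>(1) by (simp add: power_mult power_add)
  also have "\<dots> \<le> \<rho> ^ t / \<rho> ^ L"
  proof -
    have "t \<le> L * (t div L) + L"
      using mult_div_mod_eq[of L t] mod_less_divisor[OF assms(1), of t] by linarith
    then show ?thesis
      using \<rho> by (intro divide_right_mono power_decreasing) auto
  qed
  finally show "\<gamma> ^ (t div L) \<le> \<rho> ^ t / \<rho> ^ L" .
qed

locale consensus_family = nonexpansive_family A I
  for A :: "nat \<Rightarrow> real^'n^'n" and I +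
  assumes fixes_ones: "i \<in> I \<Longrightarrow> A i *v vec 1 = vec 1"
begin

lemma apply_word_ones: "set w \<subseteq> I \<Longrightarrow> apply_word A w (vec 1) = vec 1"
  by (induction w) (auto simp: fixes_ones)

lemma compact_normP_sphere_slice: "compact {x::real^'n. normP x = 1 \<and> x $ k = 0}"
proof -
  have "{x::real^'n. normP x = 1 \<and> x $ k = 0} = {x. normP x = 1} \<inter> {x. axis k 1 \<bullet> x = 0}"
    by (auto simp: inner_axis')
  moreover have "closed \<dots>"
    by (intro closed_Int closed_Collect_eq continuous_on_normP continuous_on_const closed_hyperplane)
  moreover have "norm x \<le> 2 * CARD('n)" if "normP x = 1" "x $ k = 0" for x :: "real^'n"
    using norm_sub_const_le_normP[of x k] that by simp
  ultimately show ?thesis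
    unfolding compact_eq_bounded_closed bounded_iff by auto
qed

text \<open>
  By homogeneity it suffices to bound \<open>normP (apply_word A W x)\<close> on the compact set of
  \<open>x\<close> with \<open>normP x = 1\<close> normalised by \<open>x $ k = 0\<close>.
\<close>
lemma uniform_contraction:
  assumes W: "set W \<subseteq> I" and into: "\<And>x. normP x = 1 \<Longrightarrow> normP (apply_word A W x) < 1"
  obtains \<gamma> where "0 \<le> \<gamma>" "\<gamma> < 1" "\<And>x. normP (apply_word A W x) \<le> \<gamma> * normP x"
proof -
  obtain k :: 'n where True by blast
  define K where "K = {x. normP x = 1 \<and> x $ k = 0}"
  obtain \<gamma> where \<gamma>: "0 \<le> \<gamma>" "\<gamma> < 1" "\<And>y. y \<in> K \<Longrightarrow> normP (apply_word A W y) \<le> \<gamma>"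
  proof (cases "K = {}")
    case False
    have "continuous_on K (\<lambda>x. normP (apply_word A W x))"
      using linear_continuous_on[of "apply_word A W"] linear_apply_word
      by (intro continuous_on_compose2[OF continuous_on_normP]) (auto simp: linear_conv_bounded_linear)
    then obtain ym where "ym \<in> K" "\<And>y. y \<in> K \<Longrightarrow> normP (apply_word A W y) \<le> normP (apply_word A W ym)"
      using continuous_attains_sup[OF compact_normP_sphere_slice[of k, folded K_def] False] by blast
    then show ?thesis
      using that[of "normP (apply_word A W ym)"] into normP_nonneg by (auto simp: K_def)
  qed (use that[of 0] in auto)
  have "normP (apply_word A W x) \<le> \<gamma> * normP x" for x
  proof (cases "normP x = 0")
    case True
    then have "x = (x $ k) *\<^sub>R vec 1"
      by (rule normP_eq_0_iff[THEN iffD1])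
    then have "apply_word A W x = (x $ k) *\<^sub>R vec 1"
      by (metis linear_cmul[OF linear_apply_word] apply_word_ones[OF W])
    then show ?thesis
      using True by simp
  next
    case False
    define n where "n = normP x"
    have n: "0 < n"
      using False normP_nonneg[of x] by (simp add: n_def)
    define y where "y = (1 / n) *\<^sub>R (x - (x $ k) *\<^sub>R vec 1)"
    have "y \<in> K"
      using n by (simp add: K_def y_def normP_scaleR n_def)
    moreover have "apply_word A W y = (1 / n) *\<^sub>R (apply_word A W x - (x $ k) *\<^sub>R vec 1)"
      by (simp add: y_def linear_cmul[OF linear_apply_word] linear_diff[OF linear_apply_word]
          apply_word_ones[OF W])
    ultimately have "normP ((1 / n) *\<^sub>R (apply_word A W x - (x $ k) *\<^sub>R vec 1)) \<le> \<gamma>"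
      using \<gamma>(3) by metis
    then have "(1 / n) * normP (apply_word A W x) \<le> \<gamma>"
      using n by (simp add: normP_scaleR)
    then show ?thesis
      using n by (simp add: n_def field_simps)
  qed
  then show ?thesis
    using that \<gamma>(1,2) by blast
qed

lemma consensus_of_geometric_decay:
  assumes J: "finite J" "J \<subseteq> I" "\<forall>t. \<sigma> t \<in> J"
    and \<rho>: "0 \<le> \<rho>" "\<rho> < 1" and decay: "\<And>t. normP (traj A \<sigma> x0 t) \<le> K * \<rho> ^ t"
  shows "\<exists>c::real. traj A \<sigma> x0 \<longlonglongrightarrow> c *\<^sub>R vec 1"
proof -
  define D where "D = ((\<Sum>i\<in>J. onorm (\<lambda>x. A i *v x)) + 1) * (2 * CARD('n))"
  define d where "d t = traj A \<sigma> x0 (Suc t) - traj A \<sigma> x0 t" for t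
  have D: "0 \<le> D"
    unfolding D_def by (intro mult_nonneg_nonneg add_nonneg_nonneg sum_nonneg onorm_pos_le) auto
  have onorm_le: "onorm (\<lambda>x. A (\<sigma> t) *v x) \<le> (\<Sum>i\<in>J. onorm (\<lambda>x. A i *v x))" for t
    using J by (intro member_le_sum onorm_pos_le) auto
  have d_bound: "norm (d t) \<le> D * K * \<rho> ^ t" for t
  proof -
    have "norm (d t) \<le> (onorm (\<lambda>x. A (\<sigma> t) *v x) + 1) * (2 * CARD('n)) * normP (traj A \<sigma> x0 t)"
      unfolding d_def traj.simps using J by (intro norm_mult_sub_le_normP fixes_ones) auto
    also have "\<dots> \<le> D * normP (traj A \<sigma> x0 t)"
      unfolding D_def using onorm_le[of t] normP_nonneg by (intro mult_right_mono) auto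
    also have "\<dots> \<le> D * (K * \<rho> ^ t)"
      using D decay by (intro mult_left_mono) auto
    finally show ?thesis by simp
  qed
  have "summable (\<lambda>t. D * K * \<rho> ^ t)"
    using \<rho> by (intro summable_mult summable_geometric) auto
  then have "summable d"
    using d_bound by (rule summable_comparison_test')
  moreover have "traj A \<sigma> x0 = (\<lambda>t. x0 + (\<Sum>k<t. d k))"
    unfolding fun_eq_iff d_def sum_lessThan_telescope by simp
  ultimately have lim: "traj A \<sigma> x0 \<longlonglongrightarrow> x0 + suminf d"
    by (simp add: tendsto_add summable_LIMSEQ)
  have "(\<lambda>t. normP (traj A \<sigma> x0 t)) \<longlonglongrightarrow> 0"
  proof (rule Lim_null_comparison)
    show "\<forall>\<^sub>F t in sequentially. norm (normP (traj A \<sigma> x0 t)) \<le> K * \<rho> ^ t"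
      using decay by (intro always_eventually allI) (simp add: abs_of_nonneg[OF normP_nonneg])
    show "(\<lambda>t. K * \<rho> ^ t) \<longlonglongrightarrow> 0"
      using \<rho> by (intro tendsto_mult_right_zero LIMSEQ_power_zero) auto
  qed
  then have "normP (x0 + suminf d) = 0"
    using tendsto_normP[OF lim] LIMSEQ_unique by blast
  then show ?thesis
    using lim normP_eq_0_iff by metis
qed

lemma periodic_switching_consensus:
  assumes W: "set W \<subseteq> I" "W \<noteq> []"
    and \<gamma>: "0 \<le> \<gamma>" "\<gamma> < 1" "\<And>x. normP (apply_word A W x) \<le> \<gamma> * normP x"
  defines "\<sigma> \<equiv> \<lambda>t. W ! (t mod length W)"
  shows "(\<forall>t. \<sigma> t \<in> I) \<and> (\<forall>x0. \<exists>c::real. traj A \<sigma> x0 \<longlonglongrightarrow> c *\<^sub>R vec 1)"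
proof -
  define L where "L = length W"
  have L: "0 < L"
    using W(2) by (simp add: L_def)
  have \<sigma>_eq: "\<sigma> t = W ! (t mod L)" for t
    by (simp add: \<sigma>_def L_def)
  have \<sigma>W: "\<sigma> t \<in> set W" for t
    unfolding \<sigma>_eq L_def by (rule nth_mem) (use L in \<open>simp add: L_def\<close>)
  have traj_L: "traj A \<sigma> x0 L = apply_word A W x0" for x0
  proof -
    have "map \<sigma> [0..<L] = map (\<lambda>t. W ! t) [0..<length W]"
      by (rule map_cong) (simp_all add: \<sigma>_eq L_def)
    then have "map \<sigma> [0..<L] = W"
      by (simp add: map_nth)
    then show ?thesis
      by (simp add: traj_eq_apply_word)
  qed
  have \<sigma>_shift: "(\<lambda>k. \<sigma> (L + k)) = \<sigma>"
    by (simp add: fun_eq_iff \<sigma>_eq)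
  have block: "normP (traj A \<sigma> x0 (k * L + j)) \<le> \<gamma> ^ k * normP x0" for k j x0
  proof (induction k arbitrary: x0)
    case 0
    have "\<forall>t. \<sigma> t \<in> I"
      using \<sigma>W W(1) by blast
    then show ?case
      using normP_traj_le by simp
  next
    case (Suc k)
    have "traj A \<sigma> x0 (Suc k * L + j) = traj A \<sigma> (apply_word A W x0) (k * L + j)"
      using traj_add[of A \<sigma> x0 L "k * L + j"] by (simp add: add.assoc \<sigma>_shift traj_L)
    then have "normP (traj A \<sigma> x0 (Suc k * L + j)) \<le> \<gamma> ^ k * normP (apply_word A W x0)"
      using Suc by simp
    also have "\<dots> \<le> \<gamma> ^ k * (\<gamma> * normP x0)"
      using \<gamma> by (intro mult_left_mono) auto
    finally show ?case
      by (simp add: algebra_simps)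
  qed
  obtain \<rho> where \<rho>: "0 < \<rho>" "\<rho> < 1" "\<And>t. \<gamma> ^ (t div L) \<le> \<rho> ^ t / \<rho> ^ L"
    using power_div_le_geometric[OF L \<gamma>(1,2)] by blast
  have decay: "normP (traj A \<sigma> x0 t) \<le> normP x0 / \<rho> ^ L * \<rho> ^ t" for x0 t
  proof -
    have "normP (traj A \<sigma> x0 t) \<le> \<gamma> ^ (t div L) * normP x0"
      using block[of x0 "t div L" "t mod L"] by simp
    also have "\<dots> \<le> \<rho> ^ t / \<rho> ^ L * normP x0"
      using \<rho>(3) normP_nonneg by (rule mult_right_mono)
    finally show ?thesis
      by (simp add: mult.commute)
  qed
  have "\<exists>c::real. traj A \<sigma> x0 \<longlonglongrightarrow> c *\<^sub>R vec 1" for x0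
    by (rule consensus_of_geometric_decay[where J = "set W" and \<rho> = \<rho> and K = "normP x0 / \<rho> ^ L"])
      (use decay \<sigma>W W(1) \<rho> in auto)
  then show ?thesis
    using \<sigma>W W(1) by auto
qed

lemma consensus_switching_if_paths:
  assumes "CARD('n) \<ge> 2"
    and paths: "\<And>F. proper_open_face F \<Longrightarrow> (face_edge (A ` I))\<^sup>*\<^sup>* (node_of F) None"
  shows "\<exists>\<sigma>. (\<forall>t. \<sigma> t \<in> I) \<and> (\<forall>x0. \<exists>c::real. traj A \<sigma> x0 \<longlonglongrightarrow> c *\<^sub>R vec 1)"
proof -
  obtain W where W: "set W \<subseteq> I" "\<And>x. normP x = 1 \<Longrightarrow> normP (apply_word A W x) < 1"
    using word_into_interior[OF paths] by blast
  obtain \<gamma> where \<gamma>: "0 \<le> \<gamma>" "\<gamma> < 1" "\<And>x. normP (apply_word A W x) \<le> \<gamma> * normP x"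
    using uniform_contraction[OF W] by blast
  have "W \<noteq> []"
    using exists_normP_eq_1[OF assms(1)] W(2) by force
  from periodic_switching_consensus[OF W(1) this \<gamma>] show ?thesis
    by (rule exI[of _ "\<lambda>t. W ! (t mod length W)"])
qed

end

theorem theorem1:
  fixes A :: "nat \<Rightarrow> real^'n^'n" and m :: nat
  assumes "CARD('n) \<ge> 2"
    and "\<forall>i\<in>{1..m}. A i *v (vec 1) = vec 1"
    and "\<forall>i\<in>{1..m}. \<forall>x. normP (A i *v x) \<le> normP x"
  shows "(\<exists>\<sigma>. (\<forall>t. \<sigma> t \<in> {1..m}) \<and>
            (\<forall>x0. \<exists>c::real. traj A \<sigma> x0 \<longlonglongrightarrow> c *\<^sub>R vec 1))
         \<longleftrightarrow>
         (\<forall>F. proper_open_face F \<longrightarrow>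
            (face_edge (A ` {1..m}))\<^sup>*\<^sup>* (Some {F, uminus ` F}) None)"
proof -
  interpret consensus_family A "{1..m}"
    using assms(2,3) by unfold_locales auto
  show ?thesis
    using paths_if_consensus_switching consensus_switching_if_paths[OF assms(1)] by blast
qed

end
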